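(* Let $(C,n)$ be a finite-dimensional composition algebra over a field $k$ of characteristic not $2$, with underlying vector space $V$. Then there exist a symmetric composition algebra $S$ with the same underlying quadratic space $(V,n)$ and isometries $f,g\in\mathrm{O}(n)$ such that $C=S_{f,g}$.
   Context: An algebra over $k$ is a $k$-vector space with a bilinear multiplication (not necessarily associative, commutative or unital). For a quadratic form $n$ on $V$, $b_n(x,y)=n(x+y)-n(x)-n(y)$ is its polar bilinear form, and $n$ is non-degenerate if $b_n$ has trivial radical. A composition algebra over $k$ is an algebra $C$ endowed with a non-degenerate quadratic form $n$ such that $n(xy)=n(x)n(y)$ for all $x,y\in C$. It is symmetric if $b_n(xy,z)=b_n(x,yz)$ for all $x,y,z$. $\mathrm{O}(n)$ is the group of linear isometries of $(V,n)$. For an algebra $A$ and linear maps $f,g$ on $A$, the isotope $A_{f,g}$ is the algebra with underlying space $A$ and multiplication $x\cdot y=f(x)g(y)$, where juxtaposition is the multiplication of $A$. *)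

theory Defs
  imports Complex_Main
begin

text \<open>Throughout, the k-vector space V is a type 'v with a scalar multiplication
  scale :: 'k \<Rightarrow> 'v \<Rightarrow> 'v forming a vector space in the sense of the locale
  vector_space; the whole type is the underlying space.\<close>

definition fin_dim :: "('k::field \<Rightarrow> 'v::ab_group_add \<Rightarrow> 'v) \<Rightarrow> bool" where
  "fin_dim scale \<longleftrightarrow> (\<exists>B. finite B \<and> module.span scale B = UNIV)"

definition polar :: "('v::ab_group_add \<Rightarrow> 'k::field) \<Rightarrow> 'v \<Rightarrow> 'v \<Rightarrow> 'k" where
  "polar n x y = n (x + y) - n x - n y"

definition quadratic_form :: "('k::field \<Rightarrow> 'v::ab_group_add \<Rightarrow> 'v) \<Rightarrow> ('v \<Rightarrow> 'k) \<Rightarrow> bool" where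
  "quadratic_form scale n \<longleftrightarrow>
     (\<forall>a x. n (scale a x) = a ^ 2 * n x) \<and>
     (\<forall>x. Vector_Spaces.linear scale (*) (\<lambda>y. polar n x y)) \<and>
     (\<forall>y. Vector_Spaces.linear scale (*) (\<lambda>x. polar n x y))"

definition nondegenerate :: "('v::ab_group_add \<Rightarrow> 'k::field) \<Rightarrow> bool" where
  "nondegenerate n \<longleftrightarrow> (\<forall>x. (\<forall>y. polar n x y = 0) \<longrightarrow> x = 0)"

definition bilinear_mult :: "('k::field \<Rightarrow> 'v::ab_group_add \<Rightarrow> 'v) \<Rightarrow> ('v \<Rightarrow> 'v \<Rightarrow> 'v) \<Rightarrow> bool" where
  "bilinear_mult scale m \<longleftrightarrow>
     (\<forall>x. Vector_Spaces.linear scale scale (m x)) \<and>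
     (\<forall>y. Vector_Spaces.linear scale scale (\<lambda>x. m x y))"

definition composition_algebra ::
  "('k::field \<Rightarrow> 'v::ab_group_add \<Rightarrow> 'v) \<Rightarrow> ('v \<Rightarrow> 'v \<Rightarrow> 'v) \<Rightarrow> ('v \<Rightarrow> 'k) \<Rightarrow> bool" where
  "composition_algebra scale m n \<longleftrightarrow>
     bilinear_mult scale m \<and> quadratic_form scale n \<and> nondegenerate n \<and>
     (\<forall>x y. n (m x y) = n x * n y)"

definition symmetric_composition_algebra ::
  "('k::field \<Rightarrow> 'v::ab_group_add \<Rightarrow> 'v) \<Rightarrow> ('v \<Rightarrow> 'v \<Rightarrow> 'v) \<Rightarrow> ('v \<Rightarrow> 'k) \<Rightarrow> bool" where
  "symmetric_composition_algebra scale m n \<longleftrightarrow>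
     composition_algebra scale m n \<and> (\<forall>x y z. polar n (m x y) z = polar n x (m y z))"

definition orthogonal_group :: "('k::field \<Rightarrow> 'v::ab_group_add \<Rightarrow> 'v) \<Rightarrow> ('v \<Rightarrow> 'k) \<Rightarrow> ('v \<Rightarrow> 'v) set" where
  "orthogonal_group scale n = {f. Vector_Spaces.linear scale scale f \<and> bij f \<and> (\<forall>x. n (f x) = n x)}"

definition isotope :: "('v \<Rightarrow> 'v \<Rightarrow> 'v) \<Rightarrow> ('v \<Rightarrow> 'v) \<Rightarrow> ('v \<Rightarrow> 'v) \<Rightarrow> 'v \<Rightarrow> 'v \<Rightarrow> 'v" where
  "isotope m f g = (\<lambda>x y. m (f x) (g y))"

end

theory Submission
  imports Defs
begin

text \<open>Kaplansky's trick: pick a with n(a) = 1 such that the left and right multiplications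
  L_a, R_a are isometries (this uses finite dimension, so that injective linear maps are
  bijective). Then the isotope C_{R_a^{-1}, L_a^{-1}} is a Hurwitz algebra with unit a a.
  In a Hurwitz algebra the conjugation x \<mapsto> b_n(x,1) 1 - x is an isometric involution and the
  para-Hurwitz product (x, y) \<mapsto> conj(x) conj(y) is a symmetric composition; undoing the two isotopies
  exhibits C as an isotope of it.\<close>

lemma linear_inv_bij:
  assumes lin: "Vector_Spaces.linear s s f" and "bij f"
  shows "Vector_Spaces.linear s s (inv f)"
proof -
  have f_inv: "f (inv f x) = x" and inv_f: "inv f (f x) = x" for x
    using \<open>bij f\<close> by (simp_all add: bij_is_surj surj_f_inv_f bij_is_inj)
  have hom: "f (x + y) = f x + f y" "f (s c x) = s c (f x)" for x y c
    using lin by (simp_all add: linear_iff_module_hom module_hom_iff)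
  have "inv f (x + y) = inv f x + inv f y" for x y
    using hom(1)[of "inv f x" "inv f y"] by (metis f_inv inv_f)
  moreover have "inv f (s c x) = s c (inv f x)" for c x
    using hom(2)[of c "inv f x"] by (metis f_inv inv_f)
  ultimately show ?thesis
    using lin by (simp add: linear_iff_module_hom module_hom_iff)
qed

lemma (in vector_space) fin_dim_linear_inj_imp_surj:
  assumes "fin_dim scale" and "Vector_Spaces.linear scale scale f" and "inj f"
  shows "surj f"
proof -
  obtain B0 where "finite B0" "span B0 = UNIV"
    using assms(1) unfolding fin_dim_def by blast
  obtain B where B: "independent B" "UNIV \<subseteq> span B"
    using basis_exists[of UNIV] by blast
  with \<open>finite B0\<close> \<open>span B0 = UNIV\<close> have "finite B"
    using independent_span_bound by auto
  then interpret finite_dimensional_vector_space scale B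
    using B by unfold_locales auto
  show ?thesis
    using assms(2,3) by (rule linear_inj_imp_surj)
qed

lemma isotope_inv_isotope:
  assumes "bij f" and "bij g"
  shows "isotope (isotope m f g) (inv f) (inv g) = m"
  using assms unfolding isotope_def by (simp add: bij_is_surj surj_f_inv_f)

lemma orthogonal_group_comp:
  "f \<in> orthogonal_group s n \<Longrightarrow> g \<in> orthogonal_group s n \<Longrightarrow> f \<circ> g \<in> orthogonal_group s n"
  unfolding orthogonal_group_def by (auto intro: Vector_Spaces.linear_compose bij_comp)

lemma orthogonal_group_inv:
  assumes "f \<in> orthogonal_group s n"
  shows "inv f \<in> orthogonal_group s n"
proof -
  have "n (inv f x) = n x" for x
    using assms unfolding orthogonal_group_def by (metis (mono_tags) bij_inv_eq_iff mem_Collect_eq)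
  then show ?thesis
    using assms unfolding orthogonal_group_def by (simp add: linear_inv_bij bij_imp_bij_inv)
qed

lemma composition_algebra_isotope:
  assumes "composition_algebra s m n" and "f \<in> orthogonal_group s n" and "g \<in> orthogonal_group s n"
  shows "composition_algebra s (isotope m f g) n"
proof -
  have lin: "Vector_Spaces.linear s s f" "Vector_Spaces.linear s s g"
    and iso: "\<And>x. n (f x) = n x" "\<And>x. n (g x) = n x"
    using assms(2,3) unfolding orthogonal_group_def by auto
  have "Vector_Spaces.linear s s (m (f x) \<circ> g)" "Vector_Spaces.linear s s ((\<lambda>y. m y (g x)) \<circ> f)" for x
    using assms(1) lin unfolding composition_algebra_def bilinear_mult_def
    by (auto intro: Vector_Spaces.linear_compose)
  then show ?thesis
    using assms(1) iso unfolding composition_algebra_def bilinear_mult_def isotope_def comp_def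
    by simp
qed

lemma nondegenerate_exists_anisotropic:
  fixes n :: "'v::ab_group_add \<Rightarrow> 'k::field" and x :: 'v
  assumes "nondegenerate n" and "x \<noteq> 0"
  obtains b where "n b \<noteq> 0"
proof -
  from assms obtain y where "polar n x y \<noteq> 0"
    unfolding nondegenerate_def by blast
  then show ?thesis
    using that unfolding polar_def by force
qed

locale quadratic_space = vector_space scale for scale :: "'k::field \<Rightarrow> 'v::ab_group_add \<Rightarrow> 'v" +
  fixes n :: "'v \<Rightarrow> 'k"
  assumes quadratic_form: "quadratic_form scale n"
begin

lemma linear_polar_left: "Vector_Spaces.linear scale (*) (\<lambda>x. polar n x z)"
  and linear_polar_right: "Vector_Spaces.linear scale (*) (polar n z)"
  using quadratic_form unfolding quadratic_form_def by simp_all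

lemma polar_add_left: "polar n (x + y) z = polar n x z + polar n y z"
  and polar_diff_left: "polar n (x - y) z = polar n x z - polar n y z"
  and polar_scale_left: "polar n (scale c x) z = c * polar n x z"
  by (fact linear_polar_left[unfolded linear_iff_module_hom, THEN module_hom.add]
      linear_polar_left[unfolded linear_iff_module_hom, THEN module_hom.diff]
      linear_polar_left[unfolded linear_iff_module_hom, THEN module_hom.scale])+

lemma polar_add_right: "polar n z (x + y) = polar n z x + polar n z y"
  and polar_diff_right: "polar n z (x - y) = polar n z x - polar n z y"
  and polar_scale_right: "polar n z (scale c x) = c * polar n z x"
  by (fact linear_polar_right[unfolded linear_iff_module_hom, THEN module_hom.add]
      linear_polar_right[unfolded linear_iff_module_hom, THEN module_hom.diff]
      linear_polar_right[unfolded linear_iff_module_hom, THEN module_hom.scale])+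

lemma polar_zero_left: "polar n 0 z = 0"
  using polar_scale_left[of 0 0 z] by simp

lemma polar_commute: "polar n x y = polar n y x"
  unfolding polar_def by (simp add: add.commute)

lemma quad_scale: "n (scale a x) = a\<^sup>2 * n x"
  using quadratic_form unfolding quadratic_form_def by blast

lemma quad_add: "n (x + y) = n x + n y + polar n x y"
  unfolding polar_def by simp

lemma quad_minus: "n (- x) = n x"
  using quad_scale[of "-1" x] by simp

lemma polar_self: "polar n x x = 2 * n x"
proof -
  have "n (x + x) = 2\<^sup>2 * n x"
    using quad_scale[of 2 x] by (simp add: scale_left_distrib[of 1 1, simplified])
  then show ?thesis
    unfolding polar_def by (simp add: power2_eq_square algebra_simps)
qed

end

locale composition = vector_space scale for scale :: "'k::field \<Rightarrow> 'v::ab_group_add \<Rightarrow> 'v" +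
  fixes mult :: "'v \<Rightarrow> 'v \<Rightarrow> 'v" and n :: "'v \<Rightarrow> 'k"
  assumes composition_algebra: "composition_algebra scale mult n"
begin

sublocale quadratic_space scale n
  using composition_algebra unfolding composition_algebra_def by unfold_locales simp

lemma nondegenerate: "nondegenerate n"
  and quad_mult: "n (mult x y) = n x * n y"
  and linear_mult_left: "Vector_Spaces.linear scale scale (mult x)"
  and linear_mult_right: "Vector_Spaces.linear scale scale (\<lambda>y. mult y x)"
  using composition_algebra unfolding composition_algebra_def bilinear_mult_def by simp_all

lemma mult_add_left: "mult (x + y) z = mult x z + mult y z"
  and mult_diff_left: "mult (x - y) z = mult x z - mult y z"
  and mult_scale_left: "mult (scale c x) z = scale c (mult x z)"
  by (fact linear_mult_right[unfolded linear_iff_module_hom, THEN module_hom.add]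
      linear_mult_right[unfolded linear_iff_module_hom, THEN module_hom.diff]
      linear_mult_right[unfolded linear_iff_module_hom, THEN module_hom.scale])+

lemma mult_add_right: "mult z (x + y) = mult z x + mult z y"
  and mult_diff_right: "mult z (x - y) = mult z x - mult z y"
  and mult_scale_right: "mult z (scale c x) = scale c (mult z x)"
  by (fact linear_mult_left[unfolded linear_iff_module_hom, THEN module_hom.add]
      linear_mult_left[unfolded linear_iff_module_hom, THEN module_hom.diff]
      linear_mult_left[unfolded linear_iff_module_hom, THEN module_hom.scale])+

lemma polar_mult_same_left: "polar n (mult x y) (mult x z) = n x * polar n y z"
proof -
  have "n (mult x (y + z)) = n x * n (y + z)"
    by (rule quad_mult)
  then show ?thesis
    by (simp add: mult_add_right quad_add quad_mult algebra_simps)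
qed

lemma polar_mult_same_right: "polar n (mult x y) (mult w y) = polar n x w * n y"
proof -
  have "n (mult (x + w) y) = n (x + w) * n y"
    by (rule quad_mult)
  then show ?thesis
    by (simp add: mult_add_left quad_add quad_mult polar_commute algebra_simps)
qed

lemma polar_mult_linearized:
  "polar n (mult x y) (mult w z) + polar n (mult x z) (mult w y) = polar n x w * polar n y z"
proof -
  have "polar n (mult x (y + z)) (mult w (y + z)) = polar n x w * n (y + z)"
    by (rule polar_mult_same_right)
  then show ?thesis
    by (simp add: mult_add_right polar_add_left polar_add_right quad_add polar_mult_same_right
        algebra_simps)
qed

lemma inj_mult_left:
  assumes "n a \<noteq> 0"
  shows "inj (mult a)"
proof (rule injI)
  fix x y
  assume "mult a x = mult a y"
  then have "n a * polar n (x - y) z = 0" for z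
    using polar_mult_same_left[of a "x - y" z] by (simp add: mult_diff_right polar_zero_left)
  then have "polar n (x - y) z = 0" for z
    using assms by simp
  then show "x = y"
    using nondegenerate unfolding nondegenerate_def by (metis eq_iff_diff_eq_0)
qed

lemma inj_mult_right:
  assumes "n a \<noteq> 0"
  shows "inj (\<lambda>x. mult x a)"
proof (rule injI)
  fix x y
  assume "mult x a = mult y a"
  then have "polar n (x - y) z * n a = 0" for z
    using polar_mult_same_right[of "x - y" a z] by (simp add: mult_diff_left polar_zero_left)
  then have "polar n (x - y) z = 0" for z
    using assms by simp
  then show "x = y"
    using nondegenerate unfolding nondegenerate_def by (metis eq_iff_diff_eq_0)
qed

lemma bij_mult_left: "fin_dim scale \<Longrightarrow> n a \<noteq> 0 \<Longrightarrow> bij (mult a)"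
  and bij_mult_right: "fin_dim scale \<Longrightarrow> n a \<noteq> 0 \<Longrightarrow> bij (\<lambda>x. mult x a)"
  by (simp_all add: bij_def inj_mult_left inj_mult_right fin_dim_linear_inj_imp_surj
      linear_mult_left linear_mult_right)

lemma mult_left_orthogonal: "fin_dim scale \<Longrightarrow> n a = 1 \<Longrightarrow> mult a \<in> orthogonal_group scale n"
  and mult_right_orthogonal: "fin_dim scale \<Longrightarrow> n a = 1 \<Longrightarrow> (\<lambda>x. mult x a) \<in> orthogonal_group scale n"
  by (simp_all add: orthogonal_group_def bij_mult_left bij_mult_right linear_mult_left
      linear_mult_right quad_mult)

lemma unital_isotope:
  assumes "fin_dim scale" and "(x::'v) \<noteq> 0"
  obtains f g e where "f \<in> orthogonal_group scale n" and "g \<in> orthogonal_group scale n"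
    and "\<And>y. isotope mult f g e y = y" and "\<And>y. isotope mult f g y e = y" and "n e = 1"
proof -
  obtain b where "n b \<noteq> 0"
    using nondegenerate_exists_anisotropic[OF nondegenerate assms(2)] by blast
  then obtain a where "mult a b = b"
    using bij_mult_right[OF assms(1)] by (metis bij_pointE)
  then have "n a = 1"
    using quad_mult[of a b] \<open>n b \<noteq> 0\<close> by simp
  define L R where "L = mult a" and "R = (\<lambda>x. mult x a)"
  have "L \<in> orthogonal_group scale n" "R \<in> orthogonal_group scale n"
    unfolding L_def R_def using assms(1) \<open>n a = 1\<close> mult_left_orthogonal mult_right_orthogonal
    by blast+
  then have "bij L" "bij R"
    unfolding orthogonal_group_def by simp_all
  then have "R (inv R y) = y" "L (inv L y) = y" "inv R (R a) = a" "inv L (L a) = a" for y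
    by (simp_all add: bij_is_surj surj_f_inv_f bij_is_inj)
  then show ?thesis
  proof (intro that[of "inv R" "inv L" "mult a a"])
    show "inv R \<in> orthogonal_group scale n" "inv L \<in> orthogonal_group scale n"
      by (simp_all add: orthogonal_group_inv \<open>L \<in> _\<close> \<open>R \<in> _\<close>)
  qed (simp_all add: isotope_def quad_mult \<open>n a = 1\<close> L_def R_def)
qed

end

subsection \<open>Hurwitz algebras and their para-Hurwitz products\<close>

locale hurwitz = composition scale mult n
  for scale :: "'k::field \<Rightarrow> 'v::ab_group_add \<Rightarrow> 'v" and mult n +
  fixes e :: 'v
  assumes mult_unit_left: "mult e x = x" and mult_unit_right: "mult x e = x" and quad_unit: "n e = 1"
begin

definition conjugate :: "'v \<Rightarrow> 'v" where
  "conjugate x = scale (polar n x e) e - x"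

lemma polar_unit_unit: "polar n e e = 2"
  using polar_self quad_unit by simp

lemma polar_conjugate_unit: "polar n (conjugate x) e = polar n x e"
  unfolding conjugate_def by (simp add: polar_diff_left polar_scale_left polar_unit_unit)

lemma conjugate_conjugate: "conjugate (conjugate x) = x"
  unfolding conjugate_def[of "conjugate x"] polar_conjugate_unit by (simp add: conjugate_def)

lemma quad_conjugate: "n (conjugate x) = n x"
proof -
  let ?t = "polar n x e"
  have "n (conjugate x) = n (scale ?t e) + n (- x) + polar n (scale ?t e) (- x)"
    unfolding conjugate_def by (metis diff_conv_add_uminus quad_add)
  also have "polar n (scale ?t e) (- x) = - ?t * ?t"
    using polar_diff_right[of "scale ?t e" 0 x] by (simp add: polar_scale_left polar_zero_left
        polar_commute[of e x] flip: polar_commute[of 0])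
  finally show ?thesis
    by (simp add: quad_scale quad_unit quad_minus power2_eq_square)
qed

lemma linear_conjugate: "Vector_Spaces.linear scale scale conjugate"
  unfolding linear_iff_module_hom module_hom_iff
  by (auto simp: conjugate_def polar_add_left polar_scale_left scale_left_distrib
      scale_right_diff_distrib module_axioms algebra_simps)

lemma conjugate_orthogonal: "conjugate \<in> orthogonal_group scale n"
  unfolding orthogonal_group_def
  by (simp add: linear_conjugate quad_conjugate o_bij[of conjugate conjugate]
      conjugate_conjugate fun_eq_iff)

lemma mult_conjugate_left: "mult (conjugate x) z = scale (polar n x e) z - mult x z"
  and mult_conjugate_right: "mult z (conjugate x) = scale (polar n x e) z - mult z x"
  unfolding conjugate_def
  by (simp_all add: mult_diff_left mult_scale_left mult_diff_right mult_scale_right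
      mult_unit_left mult_unit_right)

lemma polar_mult_unit_left: "polar n (mult x y) z = polar n x e * polar n y z - polar n (mult x z) y"
  using polar_mult_linearized[of x y e z] by (simp add: mult_unit_left algebra_simps)

lemma polar_mult_unit_right: "polar n (mult x z) w = polar n x w * polar n z e - polar n x (mult w z)"
  using polar_mult_linearized[of x z w e] by (simp add: mult_unit_right algebra_simps)

lemma polar_para_hurwitz_assoc:
  "polar n (mult (conjugate x) (conjugate y)) z = polar n x (mult (conjugate y) (conjugate z))"
proof -
  let ?s = "polar n z e"
  have "polar n (mult (conjugate x) (conjugate y)) z = polar n (mult x z) (conjugate y)"
    using polar_mult_unit_left[of "conjugate x" "conjugate y" z]
    by (simp add: polar_conjugate_unit mult_conjugate_left polar_diff_left polar_scale_left
        polar_commute[of z "conjugate y"])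
  also have "\<dots> = ?s * polar n x (conjugate y) - polar n x (mult (conjugate y) z)"
    by (simp add: polar_mult_unit_right)
  also have "\<dots> = polar n x (mult (conjugate y) (conjugate z))"
    by (simp add: mult_conjugate_right polar_diff_right polar_scale_right)
  finally show ?thesis .
qed

theorem symmetric_composition_para_hurwitz:
  "symmetric_composition_algebra scale (isotope mult conjugate conjugate) n"
  using composition_algebra_isotope[OF composition_algebra conjugate_orthogonal conjugate_orthogonal]
  unfolding symmetric_composition_algebra_def by (simp add: isotope_def polar_para_hurwitz_assoc)

end

theorem mainTheorem1:
  fixes scale :: "'k::field \<Rightarrow> 'v::ab_group_add \<Rightarrow> 'v"
    and mult :: "'v \<Rightarrow> 'v \<Rightarrow> 'v"
    and n :: "'v \<Rightarrow> 'k"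
  assumes "vector_space scale"
    and "fin_dim scale"
    and "(2::'k) \<noteq> 0"
    and "composition_algebra scale mult n"
  shows "\<exists>s f g. symmetric_composition_algebra scale s n \<and>
           f \<in> orthogonal_group scale n \<and> g \<in> orthogonal_group scale n \<and>
           mult = isotope s f g"
proof -
  interpret composition scale mult n
    using assms(1,4) by (simp add: composition_def composition_axioms_def)
  show ?thesis
  proof (cases "\<exists>x::'v. x \<noteq> 0")
    case False
    then have "symmetric_composition_algebra scale mult n"
      using composition_algebra unfolding symmetric_composition_algebra_def by (metis (full_types))
    moreover have "id \<in> orthogonal_group scale n"
      unfolding orthogonal_group_def by (simp add: linear_id)
    ultimately show ?thesis
      unfolding isotope_def by (metis id_apply)
  next
    case True
    then obtain f g e where f: "f \<in> orthogonal_group scale n" and g: "g \<in> orthogonal_group scale n"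
      and unit: "\<And>y. isotope mult f g e y = y" "\<And>y. isotope mult f g y e = y" "n e = 1"
      using unital_isotope[OF assms(2)] by blast
    interpret hurwitz scale "isotope mult f g" n e
      using composition_algebra_isotope[OF composition_algebra f g] unit
      by unfold_locales (simp_all add: composition_algebra_def)
    let ?S = "isotope (isotope mult f g) conjugate conjugate"
    have "isotope ?S (conjugate \<circ> inv f) (conjugate \<circ> inv g) = isotope (isotope mult f g) (inv f) (inv g)"
      by (simp add: isotope_def conjugate_conjugate)
    also have "\<dots> = mult"
      using f g by (simp add: isotope_inv_isotope orthogonal_group_def)
    finally show ?thesis
      using symmetric_composition_para_hurwitz conjugate_orthogonal f g
      by (metis orthogonal_group_comp orthogonal_group_inv)
  qed
qed

end
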